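(* Let $\mathcal H^{gen}$ be a set of measurable functions $G\colon[0,1]^d\to\mathbb R^d$ such that $G_{\#}\lambda$ is absolutely continuous with respect to Lebesgue measure for each $G\in\mathcal H^{gen}$, and let $\mathcal H^{dis}$ be a set of measurable functions $D\colon\mathbb R^d\to[0,1]$. Let $\hat G_n=\hat G_n(\omega)\in\mathcal H^{gen}$, $n\in\mathbb N$, $\omega\in\Omega$, be a random sequence of generators. Let $$\Delta_G=\inf_{G\in\mathcal H^{gen}}d_{JS}(\mu^*,G_{\#}\lambda),\qquad \Delta_D=\sup_{G\in\mathcal H^{gen}}\Big\{L(G,D_G)-\sup_{D\in\mathcal H^{dis}}L(G,D)\Big\},$$ $$\Delta_S(n)=\sup_{G\in\mathcal H^{gen},D\in\mathcal H^{dis}}|L(G,D)-\hat L_n(G,D)|,\qquad \Delta_T(n)=\sup_{D\in\mathcal H^{dis}}\hat L_n(\hat G_n,D)-\inf_{G\in\mathcal H^{gen}}\sup_{D\in\mathcal H^{dis}}\hat L_n(G,D).$$ Then for all $n\in\mathbb N$, almost surely, $$d_{JS}(\mu^*,(\hat G_n)_{\#}\lambda)\le\Delta_T(n)+\Delta_D+2\Delta_S(n)+\Delta_G.$$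
   Context: Let $d\in\mathbb N$. $\lambda$ is the restriction of $d$-dimensional Lebesgue measure to $[0,1]^d$; $G_{\#}\lambda$ is the pushforward of $\lambda$ under $G$. $\mu^*$ is a probability measure on $[0,1]^d$ with Lebesgue density $p^*$ satisfying $p^*(x)>0$ for $x\in[0,1]^d$ and $p^*(x)=0$ for $x\notin[0,1]^d$. On a probability space $(\Omega,\mathcal F,\mathbb P)$, $Y,Y_1,Y_2,\dots$ are i.i.d. $[0,1]^d$-valued random variables with law $\mu^*$ and $Z,Z_1,Z_2,\dots$ are i.i.d. $[0,1]^d$-valued random variables with law $\lambda$. For measurable $G\colon[0,1]^d\to\mathbb R^d$ and $D\colon\mathbb R^d\to[0,1]$, $L(G,D)=\frac12\mathbb E[\log D(Y)+\log(1-D(G(Z)))]$ and $\hat L_n(G,D)=\frac1{2n}\sum_{i=1}^n\log D(Y_i)+\frac1{2n}\sum_{i=1}^n\log(1-D(G(Z_i)))$ (both may take the value $-\infty$). For $G$ with $G_{\#}\lambda$ having Lebesgue density $p$, $D_G\colon\mathbb R^d\to[0,1]$ is defined by $D_G(x)=\frac{p^*(x)}{p^*(x)+p(x)}$ for $x\in[0,1]^d$ and $D_G(x)=0$ for $x\notin[0,1]^d$. The Kullback–Leibler divergence is $d_{KL}(\nu\Vert\mu)=\int\log(\frac{d\nu}{d\mu})d\nu$ and the Jensen–Shannon divergence is $d_{JS}(\nu,\mu)=\frac12\big(d_{KL}(\nu\Vert\frac{\mu+\nu}2)+d_{KL}(\mu\Vert\frac{\mu+\nu}2)\big)$. *)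

theory Defs
  imports "HOL-Probability.Probability"
begin

definition unit_cube :: "'a::euclidean_space set" where
  "unit_cube = cbox 0 One"

definition lam :: "'a::euclidean_space measure" where
  "lam = restrict_space lborel unit_cube"

definition nlog :: "real \<Rightarrow> ennreal" where
  "nlog x = (if x > 0 then ennreal (- ln x) else \<infinity>)"

definition elog :: "real \<Rightarrow> ereal" where
  "elog x = (if x > 0 then ereal (ln x) else -\<infinity>)"

text \<open>Population loss L(G,D) = 1/2 E[log D(Y) + log(1 - D(G(Z)))], Y ~ mu, Z ~ lambda.\<close>
definition Lpop :: "'a::euclidean_space measure \<Rightarrow> ('a \<Rightarrow> 'a) \<Rightarrow> ('a \<Rightarrow> real) \<Rightarrow> ereal" where
  "Lpop mu G D = - ereal (1/2) *
     enn2ereal ((\<integral>\<^sup>+ y. nlog (D y) \<partial>mu) + (\<integral>\<^sup>+ z. nlog (1 - D (G z)) \<partial>lam))"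

definition Lemp :: "(nat \<Rightarrow> 'b \<Rightarrow> 'a) \<Rightarrow> (nat \<Rightarrow> 'b \<Rightarrow> 'a) \<Rightarrow> nat \<Rightarrow> 'b
                     \<Rightarrow> ('a \<Rightarrow> 'a) \<Rightarrow> ('a \<Rightarrow> real) \<Rightarrow> ereal" where
  "Lemp Ys Zs n w G D =
     ereal (1 / (2 * real n)) * (\<Sum>i\<in>{1..n}. elog (D (Ys i w)))
   + ereal (1 / (2 * real n)) * (\<Sum>i\<in>{1..n}. elog (1 - D (G (Zs i w))))"

definition gen_density :: "('a::euclidean_space \<Rightarrow> 'a) \<Rightarrow> 'a \<Rightarrow> real" where
  "gen_density G x = enn2real (RN_deriv lborel (distr lam lborel G) x)"

definition DG :: "('a::euclidean_space \<Rightarrow> real) \<Rightarrow> ('a \<Rightarrow> 'a) \<Rightarrow> 'a \<Rightarrow> real" where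
  "DG p G x = (if x \<in> unit_cube then p x / (p x + gen_density G x) else 0)"

definition mix :: "'a measure \<Rightarrow> 'a measure \<Rightarrow> 'a measure" where
  "mix M N = measure_of (space M) (sets M) (\<lambda>A. (emeasure M A + emeasure N A) / 2)"

text \<open>Jensen-Shannon divergence (natural logarithm). KL_divergence b M N is d_KL(N || M).\<close>
definition JS :: "'a measure \<Rightarrow> 'a measure \<Rightarrow> real" where
  "JS N M = (KL_divergence (exp 1) (mix M N) N + KL_divergence (exp 1) (mix M N) M) / 2"

text \<open>|a - b| on extended reals, with |(-inf) - (-inf)| = 0.\<close>
definition eabsdiff :: "ereal \<Rightarrow> ereal \<Rightarrow> ereal" where
  "eabsdiff a b = (if a = b then 0 else \<bar>a - b\<bar>)"

end

theory Submission
  imports Defs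
begin

text \<open>
  For a generator G whose push-forward has density q, the loss L(G,D) is
  -1/2 \<integral> p (-ln D) + q (-ln (1 - D)).  By Gibbs' inequality the integrand is
  minimised pointwise by D_G = p/(p+q), where L(G,D_G) = d_JS(\<mu>*, G_# \<lambda>) - ln 2.
  The bound is then a telescoping chain: L(G_n,D_G_n) exceeds sup_D L(G_n,D) by at most
  \<Delta>_D; passing to the empirical loss costs \<Delta>_S; sup_D of the empirical loss of G_n
  exceeds the empirical min-max value by \<Delta>_T, and that value is at most sup_D of the
  empirical loss of any competitor G; returning to L costs \<Delta>_S again, and
  sup_D L(G,D) \<le> L(G,D_G).  The chain holds for every outcome, and in the extended
  reals it needs no case distinction for infinite losses.
\<close>

lemma sets_unit_cube [measurable]: "unit_cube \<in> sets (borel :: 'a::euclidean_space measure)"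
  unfolding unit_cube_def by simp

lemma prob_space_lam: "prob_space (lam :: 'a::euclidean_space measure)"
proof
  have "emeasure (lam :: 'a measure) (space lam) = emeasure lborel (unit_cube :: 'a set)"
    unfolding lam_def by (subst emeasure_restrict_space) (auto simp: space_restrict_space)
  also have "\<dots> = 1"
    unfolding unit_cube_def by (simp add: emeasure_lborel_cbox_eq inner_Basis)
  finally show "emeasure (lam :: 'a measure) (space lam) = 1" .
qed

lemma borel_measurable_nlog [measurable]: "nlog \<in> borel_measurable borel"
  unfolding nlog_def by measurable

lemma nlog_eq_ennreal: "0 < x \<Longrightarrow> nlog x = ennreal (- ln x)"
  by (simp add: nlog_def)

lemma borel_measurable_gen_density [measurable]: "gen_density G \<in> borel_measurable borel"
  unfolding gen_density_def
  using borel_measurable_RN_deriv[of lborel "distr lam lborel G"] by simp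

lemma gen_density_nonneg: "0 \<le> gen_density G x"
  unfolding gen_density_def by simp

lemma borel_measurable_DG [measurable]:
  assumes [measurable]: "p \<in> borel_measurable borel"
  shows "DG p G \<in> borel_measurable borel"
  unfolding DG_def by measurable

lemma distr_lam_eq_density_gen_density:
  fixes G :: "'a::euclidean_space \<Rightarrow> 'a"
  assumes G: "G \<in> lam \<rightarrow>\<^sub>M lborel"
    and ac: "absolutely_continuous lborel (distr lam lborel G)"
  shows "distr lam lborel G = density lborel (\<lambda>x. ennreal (gen_density G x))"
proof -
  let ?N = "distr lam lborel G"
  interpret N: prob_space ?N by (rule prob_space.prob_space_distr[OF prob_space_lam G])
  have sets: "sets ?N = sets lborel" by simp
  have "sigma_finite_measure ?N" ..
  then have "AE x in lborel. RN_deriv lborel ?N x \<noteq> \<infinity>"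
    by (rule sigma_finite_measure.RN_deriv_finite[OF sigma_finite_lborel _ ac sets])
  then have "density lborel (RN_deriv lborel ?N) = density lborel (\<lambda>x. ennreal (gen_density G x))"
    by (intro density_cong) (auto simp: gen_density_def ennreal_enn2real_if less_top elim!: AE_mp)
  moreover have "density lborel (RN_deriv lborel ?N) = ?N"
    by (rule sigma_finite_measure.density_RN_deriv[OF sigma_finite_lborel ac sets])
  ultimately show ?thesis by simp
qed

lemma prob_density_integral:
  fixes f :: "'a \<Rightarrow> real"
  assumes [measurable]: "f \<in> borel_measurable M" and f_nonneg: "\<And>x. 0 \<le> f x"
    and prob: "prob_space (density M f)"
  shows "integrable M f" and "(\<integral>x. f x \<partial>M) = 1"
proof -
  have nn: "(\<integral>\<^sup>+x. ennreal (f x) \<partial>M) = 1"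
    using prob_space.emeasure_space_1[OF prob] by (simp add: emeasure_density)
  show int: "integrable M f"
    by (rule integrableI_nn_integral_finite[where x=1]) (auto simp: f_nonneg nn)
  show "(\<integral>x. f x \<partial>M) = 1"
    using nn_integral_eq_integral[OF int] nn f_nonneg by simp
qed

text \<open>At D = p/(p+q): p (-ln D) = share_loss p q and q (-ln (1 - D)) = share_loss q p.\<close>
definition share_loss :: "real \<Rightarrow> real \<Rightarrow> real" where
  "share_loss p q = p * - ln (p / (p + q))"

lemma borel_measurable_share_loss [measurable]:
  assumes [measurable]: "f \<in> borel_measurable M" "g \<in> borel_measurable M"
  shows "(\<lambda>x. share_loss (f x) (g x)) \<in> borel_measurable M"
  unfolding share_loss_def by measurable

lemma share_loss_nonneg: "0 \<le> p \<Longrightarrow> 0 \<le> q \<Longrightarrow> 0 \<le> share_loss p q"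
  by (cases "p = 0") (auto simp: share_loss_def mult_nonneg_nonpos)

lemma share_loss_le_log_loss:
  assumes p: "0 \<le> p" and q: "0 \<le> q" and d: "0 < d"
  shows "share_loss p q \<le> p * - ln d + (d * (p + q) - p)"
proof (cases "p = 0")
  case True
  then show ?thesis using q d by (simp add: share_loss_def)
next
  case False
  with p have p: "0 < p" by simp
  have "ln d - ln (p / (p + q)) = ln (d * (p + q) / p)"
    using p q d by (simp add: ln_div ln_mult)
  also have "\<dots> \<le> d * (p + q) / p - 1"
    using p q d by (intro ln_le_minus_one) auto
  finally have "p * (ln d - ln (p / (p + q))) \<le> p * (d * (p + q) / p - 1)"
    using p by (intro mult_left_mono) auto
  also have "\<dots> = d * (p + q) - p" using p by (simp add: field_simps)
  finally show ?thesis unfolding share_loss_def by (simp add: algebra_simps)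
qed

lemma share_loss_le: "0 \<le> p \<Longrightarrow> 0 \<le> q \<Longrightarrow> share_loss p q \<le> q"
  using share_loss_le_log_loss[of p q 1] by simp

lemma mult_ln_mixture_ratio:
  assumes "0 \<le> p" "0 \<le> q"
  shows "p * ln (p / ((p + q) / 2)) = p * ln 2 - share_loss p q"
proof (cases "p = 0")
  case True
  then show ?thesis by (simp add: share_loss_def)
next
  case False
  with assms have "ln (2 * (p / (p + q))) = ln 2 + ln (p / (p + q))"
    by (intro ln_mult_pos) auto
  then show ?thesis
    by (simp add: share_loss_def algebra_simps)
qed

text \<open>Gibbs' inequality: the linear remainders of the two tangent bounds cancel.\<close>
lemma share_loss_add_le_log_loss:
  assumes p: "0 \<le> p" and q: "0 \<le> q" and d: "0 < d" "d < 1"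
  shows "share_loss p q + share_loss q p \<le> p * - ln d + q * - ln (1 - d)"
  using share_loss_le_log_loss[OF p q d(1)] share_loss_le_log_loss[OF q p, of "1 - d"] d
  by (simp add: algebra_simps)

lemma share_loss_add_le_nlog:
  assumes p: "0 \<le> p" and q: "0 \<le> q" and d: "0 \<le> d" "d \<le> 1"
  shows "ennreal (share_loss p q) + ennreal (share_loss q p) \<le> ennreal p * nlog d + ennreal q * nlog (1 - d)"
proof -
  consider "d = 0" | "d = 1" | "0 < d" "d < 1" using d by linarith
  then show ?thesis
  proof cases
    case 1
    then show ?thesis
      using p q by (cases "p = 0") (auto simp: share_loss_def nlog_def ennreal_mult_top)
  next
    case 2
    then show ?thesis
      using p q by (cases "q = 0") (auto simp: share_loss_def nlog_def ennreal_mult_top)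
  next
    case 3
    have "ennreal (share_loss p q) + ennreal (share_loss q p) = ennreal (share_loss p q + share_loss q p)"
      using p q by (simp add: share_loss_nonneg ennreal_plus)
    also have "\<dots> \<le> ennreal (p * - ln d + q * - ln (1 - d))"
      using share_loss_add_le_log_loss[OF p q 3] by (rule ennreal_leI)
    also have "\<dots> = ennreal (p * - ln d) + ennreal (q * - ln (1 - d))"
      using p q 3 by (intro ennreal_plus) (simp_all add: mult_nonneg_nonpos)
    also have "\<dots> = ennreal p * nlog d + ennreal q * nlog (1 - d)"
      using p q 3 by (simp add: nlog_eq_ennreal ennreal_mult[symmetric])
    finally show ?thesis .
  qed
qed

lemma mix_density:
  fixes f g :: "'a \<Rightarrow> ennreal"
  assumes [measurable]: "f \<in> borel_measurable M" "g \<in> borel_measurable M"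
  shows "mix (density M f) (density M g) = density M (\<lambda>x. (f x + g x) / 2)"
    (is "_ = ?\<rho>")
proof -
  have "emeasure ?\<rho> A = (emeasure (density M f) A + emeasure (density M g) A) / 2"
    if [measurable]: "A \<in> sets M" for A
  proof -
    have "emeasure ?\<rho> A = (\<integral>\<^sup>+x. (f x * indicator A x + g x * indicator A x) / 2 \<partial>M)"
      by (simp add: emeasure_density ennreal_times_divide algebra_simps)
    also have "\<dots> = (\<integral>\<^sup>+x. f x * indicator A x + g x * indicator A x \<partial>M) / 2"
      by (rule nn_integral_divide) measurable
    also have "\<dots> = (emeasure (density M f) A + emeasure (density M g) A) / 2"
      by (simp add: emeasure_density nn_integral_add)
    finally show ?thesis .
  qed
  then have "mix (density M f) (density M g) = measure_of (space M) (sets M) (emeasure ?\<rho>)"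
    unfolding mix_def space_density sets_density
    by (intro measure_of_eq) (auto simp: sets.space_closed sets.sigma_sets_eq)
  also have "\<dots> = ?\<rho>"
    using measure_of_of_measure[of ?\<rho>] by simp
  finally show ?thesis .
qed

lemma (in sigma_finite_measure) KL_mixture_density:
  fixes f g :: "'a \<Rightarrow> real"
  assumes [measurable]: "f \<in> borel_measurable M" "g \<in> borel_measurable M"
    and f_nonneg: "\<And>x. 0 \<le> f x" and g_nonneg: "\<And>x. 0 \<le> g x"
    and f_prob: "prob_space (density M f)" and g_int: "integrable M g"
  shows "KL_divergence (exp 1) (density M (\<lambda>x. (f x + g x) / 2)) (density M f)
    = ln 2 - (\<integral>x. share_loss (f x) (g x) \<partial>M)"
proof -
  have "KL_divergence (exp 1) (density M (\<lambda>x. (f x + g x) / 2)) (density M f)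
      = (\<integral>x. f x * log (exp 1) (f x / ((f x + g x) / 2)) \<partial>M)"
    by (rule KL_density_density) (auto simp: f_nonneg g_nonneg add_nonneg_eq_0_iff)
  also have "\<dots> = (\<integral>x. f x * ln 2 - share_loss (f x) (g x) \<partial>M)"
    by (simp only: log_def ln_exp div_by_1 mult_ln_mixture_ratio[OF f_nonneg g_nonneg])
  also have "\<dots> = (\<integral>x. f x \<partial>M) * ln 2 - (\<integral>x. share_loss (f x) (g x) \<partial>M)"
    using prob_density_integral(1)[OF _ f_nonneg f_prob]
    by (subst Bochner_Integration.integral_diff)
       (auto intro!: Bochner_Integration.integrable_bound[OF g_int]
             simp: share_loss_nonneg share_loss_le f_nonneg g_nonneg)
  finally show ?thesis
    using prob_density_integral(2)[OF _ f_nonneg f_prob] by simp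
qed

lemma (in sigma_finite_measure) JS_density_density:
  fixes f g :: "'a \<Rightarrow> real"
  assumes [measurable]: "f \<in> borel_measurable M" "g \<in> borel_measurable M"
    and f_nonneg: "\<And>x. 0 \<le> f x" and g_nonneg: "\<And>x. 0 \<le> g x"
    and f_prob: "prob_space (density M f)" and g_prob: "prob_space (density M g)"
  shows "JS (density M f) (density M g)
    = ln 2 - ((\<integral>x. share_loss (f x) (g x) \<partial>M) + (\<integral>x. share_loss (g x) (f x) \<partial>M)) / 2"
proof -
  have f_int: "integrable M f"
    by (rule prob_density_integral(1)[OF _ f_nonneg f_prob]) measurable
  have g_int: "integrable M g"
    by (rule prob_density_integral(1)[OF _ g_nonneg g_prob]) measurable
  have "(ennreal (g x) + ennreal (f x)) / 2 = ennreal ((g x + f x) / 2)" for x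
    using f_nonneg[of x] g_nonneg[of x] by (subst divide_ennreal[symmetric]) (auto simp: ennreal_plus)
  then have "mix (density M g) (density M f) = density M (\<lambda>x. (g x + f x) / 2)"
    by (simp add: mix_density)
  moreover have "density M (\<lambda>x. (g x + f x) / 2) = density M (\<lambda>x. (f x + g x) / 2)"
    by (simp add: add.commute)
  ultimately show ?thesis
    using KL_mixture_density[OF _ _ f_nonneg g_nonneg f_prob g_int]
      KL_mixture_density[OF _ _ g_nonneg f_nonneg g_prob f_int]
    by (simp add: JS_def field_simps)
qed

locale gan_model =
  fixes p :: "'a::euclidean_space \<Rightarrow> real" and G :: "'a \<Rightarrow> 'a"
  assumes p_meas [measurable]: "p \<in> borel_measurable borel"
    and p_pos: "\<And>x. x \<in> unit_cube \<Longrightarrow> p x > 0"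
    and p_zero: "\<And>x. x \<notin> unit_cube \<Longrightarrow> p x = 0"
    and p_prob: "prob_space (density lborel (\<lambda>x. ennreal (p x)))"
    and G_meas [measurable]: "G \<in> lam \<rightarrow>\<^sub>M lborel"
    and G_ac: "absolutely_continuous lborel (distr lam lborel G)"
begin

abbreviation "\<mu> \<equiv> density lborel (\<lambda>x. ennreal (p x))"
abbreviation "q \<equiv> gen_density G"

lemma p_nonneg: "0 \<le> p x"
  using p_pos[of x] p_zero[of x] by (cases "x \<in> unit_cube") auto

lemma distr_G_eq_density: "distr lam lborel G = density lborel (\<lambda>x. ennreal (q x))"
  by (rule distr_lam_eq_density_gen_density[OF G_meas G_ac])

lemma prob_space_gen_density: "prob_space (density lborel (\<lambda>x. ennreal (q x)))"
  unfolding distr_G_eq_density[symmetric] by (rule prob_space.prob_space_distr[OF prob_space_lam G_meas])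

lemma JS_eq_share_loss:
  "JS \<mu> (distr lam lborel G) = ln 2 - ((\<integral>x. share_loss (p x) (q x) \<partial>lborel)
              + (\<integral>x. share_loss (q x) (p x) \<partial>lborel)) / 2"
  unfolding distr_G_eq_density
  by (rule sigma_finite_measure.JS_density_density[OF sigma_finite_lborel])
     (auto simp: p_nonneg gen_density_nonneg p_prob prob_space_gen_density)

lemma Lpop_eq_nn_integral:
  assumes [measurable]: "D \<in> borel_measurable borel"
  shows "Lpop \<mu> G D = - ereal (1/2) * enn2ereal
    (\<integral>\<^sup>+x. ennreal (p x) * nlog (D x) + ennreal (q x) * nlog (1 - D x) \<partial>lborel)"
proof -
  have "(\<integral>\<^sup>+z. nlog (1 - D (G z)) \<partial>lam) = (\<integral>\<^sup>+x. nlog (1 - D x) \<partial>distr lam lborel G)"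
    by (rule nn_integral_distr[symmetric, OF G_meas]) simp
  then show ?thesis
    unfolding Lpop_def distr_G_eq_density by (simp add: nn_integral_density nn_integral_add)
qed

lemma nlog_DG: "ennreal (p x) * nlog (DG p G x) = ennreal (share_loss (p x) (q x))"
proof (cases "x \<in> unit_cube")
  case True
  then have "0 < p x" by (rule p_pos)
  with True show ?thesis
    using gen_density_nonneg[of G x]
    by (simp add: DG_def share_loss_def nlog_eq_ennreal ennreal_mult[symmetric])
next
  case False
  then show ?thesis by (simp add: p_zero share_loss_def)
qed

lemma nlog_one_minus_DG:
  "ennreal (q x) * nlog (1 - DG p G x) = ennreal (share_loss (q x) (p x))"
proof (cases "q x = 0")
  case True
  then show ?thesis by (simp add: share_loss_def)
next
  case False
  then have q_pos: "0 < q x" using gen_density_nonneg[of G x] by simp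
  have "1 - DG p G x = q x / (q x + p x)"
  proof (cases "x \<in> unit_cube")
    case True
    then show ?thesis using q_pos p_nonneg[of x] by (simp add: DG_def field_simps)
  next
    case False
    then show ?thesis using q_pos by (simp add: DG_def p_zero)
  qed
  then show ?thesis
    using q_pos p_nonneg[of x]
    by (simp add: share_loss_def nlog_eq_ennreal ennreal_mult[symmetric])
qed

lemma Lpop_DG: "Lpop \<mu> G (DG p G) = ereal (JS \<mu> (distr lam lborel G) - ln 2)"
proof -
  have int: "integrable lborel (\<lambda>x. share_loss (p x) (q x))"
    "integrable lborel (\<lambda>x. share_loss (q x) (p x))"
    using prob_density_integral(1)[OF _ p_nonneg p_prob]
      prob_density_integral(1)[OF _ gen_density_nonneg prob_space_gen_density]
    by (auto intro: Bochner_Integration.integrable_bound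
             simp: share_loss_nonneg share_loss_le p_nonneg gen_density_nonneg)
  have "(\<integral>\<^sup>+x. ennreal (p x) * nlog (DG p G x) + ennreal (q x) * nlog (1 - DG p G x) \<partial>lborel)
    = ennreal ((\<integral>x. share_loss (p x) (q x) \<partial>lborel)
               + (\<integral>x. share_loss (q x) (p x) \<partial>lborel))"
    using int
    by (simp add: nlog_DG nlog_one_minus_DG nn_integral_add nn_integral_eq_integral ennreal_plus
             share_loss_nonneg p_nonneg gen_density_nonneg integral_nonneg_AE)
  moreover have "0 \<le> (\<integral>x. share_loss (p x) (q x) \<partial>lborel)
               + (\<integral>x. share_loss (q x) (p x) \<partial>lborel)"
    by (auto intro!: add_nonneg_nonneg integral_nonneg_AE
             simp: share_loss_nonneg p_nonneg gen_density_nonneg)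
  ultimately show ?thesis
    unfolding Lpop_eq_nn_integral[OF borel_measurable_DG[OF p_meas]] JS_eq_share_loss by simp
qed

lemma Lpop_le_Lpop_DG:
  assumes D_meas [measurable]: "D \<in> borel_measurable borel" and D_range: "\<And>x. 0 \<le> D x \<and> D x \<le> 1"
  shows "Lpop \<mu> G D \<le> Lpop \<mu> G (DG p G)"
proof -
  have "(\<integral>\<^sup>+x. ennreal (p x) * nlog (DG p G x) + ennreal (q x) * nlog (1 - DG p G x) \<partial>lborel)
    \<le> (\<integral>\<^sup>+x. ennreal (p x) * nlog (D x) + ennreal (q x) * nlog (1 - D x) \<partial>lborel)"
    (is "?opt \<le> ?D")
    unfolding nlog_DG nlog_one_minus_DG
    by (intro nn_integral_mono share_loss_add_le_nlog) (auto simp: p_nonneg gen_density_nonneg D_range)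
  then have "ereal (1/2) * enn2ereal ?opt \<le> ereal (1/2) * enn2ereal ?D"
    by (intro ereal_mult_left_mono) (simp_all add: less_eq_ennreal.rep_eq)
  then show ?thesis
    unfolding Lpop_eq_nn_integral[OF D_meas] Lpop_eq_nn_integral[OF borel_measurable_DG[OF p_meas]]
      ereal_mult_minus_left ereal_minus_le_minus .
qed

end

lemma eabsdiff_le_imp_le_add: "eabsdiff a b \<le> c \<Longrightarrow> a \<le> b + c"
  by (cases a; cases b; cases c) (auto simp: eabsdiff_def split: if_splits)

lemma eabsdiff_commute: "eabsdiff a b = eabsdiff b a"
  by (cases a; cases b) (auto simp: eabsdiff_def)

lemma ereal_le_minus_add: "(x::ereal) \<le> (x - y) + y"
  by (cases x; cases y) auto

lemma ereal_le_add_INF: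
  fixes a x :: ereal
  assumes le: "\<And>i. i \<in> I \<Longrightarrow> a \<le> x + f i"
  shows "a \<le> x + (INF i\<in>I. f i)"
proof (cases x)
  case (real r)
  then have "a - x \<le> (INF i\<in>I. f i)"
    using le by (intro INF_greatest) (simp add: ereal_minus_le add.commute)
  then show ?thesis using real by (simp add: ereal_minus_le add.commute)
next
  case PInf
  then show ?thesis by simp
next
  case MInf
  show ?thesis
  proof (cases "(INF i\<in>I. f i) = \<infinity>")
    case False
    then have "(INF i\<in>I. f i) < \<infinity>" by (simp add: less_top)
    then obtain i where "i \<in> I" "f i < \<infinity>" unfolding INF_less_iff ..
    then have "a = -\<infinity>" using le[of i] MInf by (cases "f i") auto
    then show ?thesis by simp
  qed (simp add: MInf)
qed

lemma SUP_le_SUP_add_ereal: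
  fixes f g :: "'a \<Rightarrow> ereal"
  assumes "\<And>i. i \<in> A \<Longrightarrow> f i \<le> g i + c"
  shows "(SUP i\<in>A. f i) \<le> (SUP i\<in>A. g i) + c"
proof (rule SUP_least)
  fix i assume "i \<in> A"
  then have "f i \<le> g i + c" by (rule assms)
  also have "\<dots> \<le> (SUP i\<in>A. g i) + c" using \<open>i \<in> A\<close> by (intro add_right_mono SUP_upper)
  finally show "f i \<le> (SUP i\<in>A. g i) + c" .
qed

lemma gan_error_decomposition:
  fixes Lp Le :: "'g \<Rightarrow> 'd \<Rightarrow> ereal" and Lopt :: "'g \<Rightarrow> ereal"
  assumes g0: "g0 \<in> Hg" and G: "G \<in> Hg"
    and opt: "\<And>G D. G \<in> Hg \<Longrightarrow> D \<in> Hd \<Longrightarrow> Lp G D \<le> Lopt G"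
  shows "Lopt g0 \<le> ((SUP D\<in>Hd. Le g0 D) - (INF G\<in>Hg. SUP D\<in>Hd. Le G D))
      + (SUP G\<in>Hg. Lopt G - (SUP D\<in>Hd. Lp G D))
      + 2 * (SUP GD\<in>Hg \<times> Hd. eabsdiff (Lp (fst GD) (snd GD)) (Le (fst GD) (snd GD)))
      + Lopt G"
proof -
  define U where "U G = (SUP D\<in>Hd. Le G D)" for G
  define V where "V G = (SUP D\<in>Hd. Lp G D)" for G
  define I where "I = (INF G\<in>Hg. U G)"
  define S where "S = (SUP GD\<in>Hg \<times> Hd. eabsdiff (Lp (fst GD) (snd GD)) (Le (fst GD) (snd GD)))"
  define Dl where "Dl = (SUP G\<in>Hg. Lopt G - V G)"
  have S_bound: "Lp G' D \<le> Le G' D + S \<and> Le G' D \<le> Lp G' D + S" if "G' \<in> Hg" "D \<in> Hd" for G' D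
  proof -
    have "eabsdiff (Lp G' D) (Le G' D) \<le> S"
      unfolding S_def using that by (intro SUP_upper2[of "(G', D)"]) auto
    then show ?thesis by (metis eabsdiff_le_imp_le_add eabsdiff_commute)
  qed
  have V_le_U: "V G' \<le> U G' + S" and U_le_V: "U G' \<le> V G' + S" if "G' \<in> Hg" for G'
    unfolding U_def V_def using S_bound[OF that] by (simp_all add: SUP_le_SUP_add_ereal)
  have "Lopt g0 - V g0 \<le> Dl"
    unfolding Dl_def using g0 by (rule SUP_upper)
  then have "Lopt g0 \<le> Dl + V g0"
    using ereal_le_minus_add[of "Lopt g0" "V g0"] by (meson add_right_mono order_trans)
  also have "\<dots> \<le> Dl + ((U g0 - I) + I + S)"
    using V_le_U[OF g0] ereal_le_minus_add[of "U g0" I] by (meson add_left_mono add_right_mono order_trans)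
  also have "\<dots> \<le> Dl + ((U g0 - I) + (Lopt G + S) + S)"
  proof -
    have "I \<le> U G" unfolding I_def by (rule INF_lower[OF G])
    also have "\<dots> \<le> V G + S" by (rule U_le_V[OF G])
    also have "\<dots> \<le> Lopt G + S" unfolding V_def using opt[OF G] by (intro add_right_mono SUP_least)
    finally show ?thesis by (meson add_left_mono add_right_mono)
  qed
  also have "\<dots> = (U g0 - I) + Dl + 2 * S + Lopt G"
    unfolding numeral_eq_ereal mult_2_ereal by (simp only: ac_simps)
  finally show ?thesis unfolding U_def V_def I_def S_def Dl_def .
qed

theorem proposition1:
  fixes M :: "'b measure"
    and p :: "'a::euclidean_space \<Rightarrow> real"
    and Ys Zs :: "nat \<Rightarrow> 'b \<Rightarrow> 'a"
    and Hgen :: "('a \<Rightarrow> 'a) set"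
    and Hdis :: "('a \<Rightarrow> real) set"
    and Ghat :: "nat \<Rightarrow> 'b \<Rightarrow> ('a \<Rightarrow> 'a)"
    and n :: nat
  assumes M: "prob_space M"
    and p_meas: "p \<in> borel_measurable borel"
    and p_pos: "\<And>x. x \<in> unit_cube \<Longrightarrow> p x > 0"
    and p_zero: "\<And>x. x \<notin> unit_cube \<Longrightarrow> p x = 0"
    and mu_prob: "prob_space (density lborel (\<lambda>x. ennreal (p x)))"
    and Ys_meas: "\<And>i. Ys i \<in> M \<rightarrow>\<^sub>M lborel"
    and Ys_cube: "\<And>i w. w \<in> space M \<Longrightarrow> Ys i w \<in> unit_cube"
    and Ys_law: "\<And>i. distr M lborel (Ys i) = density lborel (\<lambda>x. ennreal (p x))"
    and Ys_indep: "prob_space.indep_vars M (\<lambda>_. lborel) Ys UNIV"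
    and Zs_meas: "\<And>i. Zs i \<in> M \<rightarrow>\<^sub>M lam"
    and Zs_law: "\<And>i. distr M lam (Zs i) = lam"
    and Zs_indep: "prob_space.indep_vars M (\<lambda>_. lam) Zs UNIV"
    and Hgen_meas: "\<And>G. G \<in> Hgen \<Longrightarrow> G \<in> lam \<rightarrow>\<^sub>M lborel"
    and Hgen_ac: "\<And>G. G \<in> Hgen \<Longrightarrow> absolutely_continuous lborel (distr lam lborel G)"
    and Hdis_meas: "\<And>D. D \<in> Hdis \<Longrightarrow> D \<in> borel_measurable borel"
    and Hdis_range: "\<And>D x. D \<in> Hdis \<Longrightarrow> 0 \<le> D x \<and> D x \<le> 1"
    and Ghat_in: "\<And>k w. Ghat k w \<in> Hgen"
    and n_pos: "n \<ge> 1"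
  shows "AE w in M.
    ereal (JS (density lborel (\<lambda>x. ennreal (p x))) (distr lam lborel (Ghat n w)))
    \<le> ((SUP D\<in>Hdis. Lemp Ys Zs n w (Ghat n w) D)
          - (INF G\<in>Hgen. SUP D\<in>Hdis. Lemp Ys Zs n w G D))
      + (SUP G\<in>Hgen. Lpop (density lborel (\<lambda>x. ennreal (p x))) G (DG p G)
           - (SUP D\<in>Hdis. Lpop (density lborel (\<lambda>x. ennreal (p x))) G D))
      + 2 * (SUP GD\<in>Hgen \<times> Hdis.
               eabsdiff (Lpop (density lborel (\<lambda>x. ennreal (p x))) (fst GD) (snd GD))
                        (Lemp Ys Zs n w (fst GD) (snd GD)))
      + (INF G\<in>Hgen. ereal (JS (density lborel (\<lambda>x. ennreal (p x))) (distr lam lborel G)))"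
proof -
  let ?\<mu> = "density lborel (\<lambda>x. ennreal (p x))"
  let ?JS = "\<lambda>G. JS ?\<mu> (distr lam lborel G)"
  have model: "gan_model p G" if "G \<in> Hgen" for G
    using p_meas p_pos p_zero mu_prob Hgen_meas[OF that] Hgen_ac[OF that] by (rule gan_model.intro)
  have Lopt: "Lpop ?\<mu> G (DG p G) = ereal (?JS G - ln 2)" if "G \<in> Hgen" for G
    using gan_model.Lpop_DG[OF model[OF that]] .
  have opt: "Lpop ?\<mu> G D \<le> Lpop ?\<mu> G (DG p G)" if "G \<in> Hgen" "D \<in> Hdis" for G D
    using gan_model.Lpop_le_Lpop_DG[OF model[OF that(1)] Hdis_meas[OF that(2)] Hdis_range[OF that(2)]] .
  \<comment> \<open>The bound holds for every outcome.\<close>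
  show ?thesis (is "AE w in M. _ \<le> ?X w + _")
  proof (rule AE_I2, rule ereal_le_add_INF)
    fix w G assume G: "G \<in> Hgen"
    have "ereal (?JS (Ghat n w)) = ereal (?JS (Ghat n w) - ln 2) + ereal (ln 2)"
      by simp
    also have "\<dots> \<le> ?X w + ereal (?JS G - ln 2) + ereal (ln 2)"
      using gan_error_decomposition[where Lp = "Lpop ?\<mu>" and Le = "Lemp Ys Zs n w"
          and Lopt = "\<lambda>G. Lpop ?\<mu> G (DG p G)" and Hd = Hdis, OF Ghat_in G opt]
      by (intro add_right_mono) (simp add: Lopt[OF Ghat_in] Lopt[OF G])
    also have "\<dots> = ?X w + ereal (?JS G)"
      by (simp add: add.assoc)
    finally show "ereal (?JS (Ghat n w)) \<le> ?X w + ereal (?JS G)" .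
  qed
qed

end
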